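(* Let $\delta\in(0,1)$ and $\lambda_0\in(0,\pi)$. Let $\{U_t,t\in\mathbb{Z}\}$ be a zero-mean weakly stationary process with autocovariance $\gamma_U$ satisfying $\sum_{h\in\mathbb{Z}}|\gamma_U(h)|<\infty$ and with spectral density $f_U$ which is continuous on $[0,\pi]$ and satisfies $\inf_{\lambda\in[0,\pi]}f_U(\lambda)>0$. Let $\{X_{t,\delta},t\in\mathbb{Z}\}$ be a zero-mean weakly stationary process with spectral density $$f_\delta(\lambda)=\frac{f_U(\lambda)}{|1-(1-\delta)e^{-i(\lambda-\lambda_0)}|^{2}\,|1-(1-\delta)e^{-i(\lambda+\lambda_0)}|^{2}},\qquad \lambda\in\mathbb{R}.$$ Given $X_{1,\delta},\dots,X_{n,\delta}$, let $N=\lfloor n/2\rfloor$, $\mathcal{G}(n)=\{-N,\dots,-1,1,\dots,N\}$, $\lambda_{j,n}=2\pi j/n$, $$I_{n,\delta}(\lambda)=\frac{1}{2\pi n}\Big|\sum_{t=1}^nX_{t,\delta}e^{-i\lambda t}\Big|^2,\quad \widehat\gamma_\delta(h)=\frac{2\pi}{n}\sum_{j\in\mathcal{G}(n)}I_{n,\delta}(\lambda_{j,n})\cos(\lambda_{j,n}h),\quad \widetilde\gamma_\delta(h)=\frac1n\sum_{t=1}^{n-|h|}X_{t,\delta}X_{t+|h|,\delta}.$$ Then for any $|h|<n$, $$\widehat\gamma_\delta(h)=\widetilde\gamma_\delta(h)+O_P(n^{-1}\delta^{-2}).$$ *)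

theory Defs
  imports "HOL-Probability.Probability"
begin

definition weakly_stationary :: "'a measure \<Rightarrow> (int \<Rightarrow> 'a \<Rightarrow> real) \<Rightarrow> bool" where
  "weakly_stationary M X \<longleftrightarrow> prob_space M \<and>
     (\<forall>t. X t \<in> borel_measurable M \<and> integrable M (\<lambda>\<omega>. (X t \<omega>)^2) \<and> (\<integral>\<omega>. X t \<omega> \<partial>M) = 0) \<and>
     (\<forall>t h. (\<integral>\<omega>. X t \<omega> * X (t + h) \<omega> \<partial>M) = (\<integral>\<omega>. X 0 \<omega> * X h \<omega> \<partial>M))"

definition autocov :: "'a measure \<Rightarrow> (int \<Rightarrow> 'a \<Rightarrow> real) \<Rightarrow> int \<Rightarrow> real" where
  "autocov M X h = (\<integral>\<omega>. X 0 \<omega> * X h \<omega> \<partial>M)"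

definition spectral_density :: "(int \<Rightarrow> real) \<Rightarrow> (real \<Rightarrow> real) \<Rightarrow> bool" where
  "spectral_density \<gamma> f \<longleftrightarrow>
     (\<forall>h. ((\<lambda>l. cis (of_int h * l) * complex_of_real (f l)) has_integral complex_of_real (\<gamma> h)) {-pi..pi})"

definition f_delta :: "(real \<Rightarrow> real) \<Rightarrow> real \<Rightarrow> real \<Rightarrow> real \<Rightarrow> real" where
  "f_delta fU lam0 \<delta> l = fU l /
     ((cmod (1 - complex_of_real (1 - \<delta>) * cis (- (l - lam0))))^2 *
      (cmod (1 - complex_of_real (1 - \<delta>) * cis (- (l + lam0))))^2)"

definition periodogram :: "nat \<Rightarrow> (int \<Rightarrow> 'a \<Rightarrow> real) \<Rightarrow> 'a \<Rightarrow> real \<Rightarrow> real" where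
  "periodogram n X \<omega> l =
     (cmod (\<Sum>t = 1..int n. complex_of_real (X t \<omega>) * cis (- l * of_int t)))^2 / (2 * pi * real n)"

definition Gset :: "nat \<Rightarrow> int set" where
  "Gset n = {- int (n div 2) .. int (n div 2)} - {0}"

definition fourier_freq :: "nat \<Rightarrow> int \<Rightarrow> real" where
  "fourier_freq n j = 2 * pi * of_int j / real n"

definition gamma_hat :: "nat \<Rightarrow> (int \<Rightarrow> 'a \<Rightarrow> real) \<Rightarrow> int \<Rightarrow> 'a \<Rightarrow> real" where
  "gamma_hat n X h \<omega> = (2 * pi / real n) *
     (\<Sum>j\<in>Gset n. periodogram n X \<omega> (fourier_freq n j) * cos (fourier_freq n j * of_int h))"

definition gamma_tilde :: "nat \<Rightarrow> (int \<Rightarrow> 'a \<Rightarrow> real) \<Rightarrow> int \<Rightarrow> 'a \<Rightarrow> real" where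
  "gamma_tilde n X h \<omega> = (1 / real n) * (\<Sum>t = 1..int n - \<bar>h\<bar>. X t \<omega> * X (t + \<bar>h\<bar>) \<omega>)"

end

theory Submission
  imports Defs
begin

(*
  The DFT estimator is a circular autocovariance: gamma_hat(h) equals gamma_tilde(h) plus the
  wrapped-around lag gamma_tilde(n - |h|), minus the squared sample mean (frequency 0 is left out)
  and, for even n, plus a Nyquist term. Each error term has expectation O(K / n) as soon as
  |sum_{s,t} c_s c_t gamma_X(t - s)| <= n K for all weights |c_t| <= 1.

  Such a K comes from the spectral densities: gamma_U is gamma_X filtered by the symmetric
  operator |1 - 2 r cos(lam0) B + r^2 B^2|^2 with r = 1 - delta. Inverting each of the two factors
  with the coefficients psi_m = r^m sin((m + 1) lam0) / sin lam0, whose absolute sum is at most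
  1 / (delta sin lam0), gives K = sum_k |gamma_U(k)| / (delta sin lam0)^2, and Markov's inequality
  yields the bound O_P(n^-1 delta^-2) uniformly in delta.
*)

section \<open>Inverse of a second-order autoregressive filter\<close>

(* ma_coeff r lam m = r^m U_m(cos lam), with U_m the Chebyshev polynomial of the second kind, is the
   m-th power series coefficient of 1 / ((1 - r e^(i lam) z) (1 - r e^(-i lam) z)): the causal
   inverse of the filter 1 - 2 r cos lam B + r^2 B^2 below. *)
definition ma_coeff :: "real \<Rightarrow> real \<Rightarrow> nat \<Rightarrow> real" where
  "ma_coeff r lam m = r ^ m * sin (real (m + 1) * lam) / sin lam"

lemma ma_coeff_0 [simp]: "sin lam \<noteq> 0 \<Longrightarrow> ma_coeff r lam 0 = 1"
  by (simp add: ma_coeff_def)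

lemma ma_coeff_1 [simp]: "sin lam \<noteq> 0 \<Longrightarrow> ma_coeff r lam (Suc 0) = 2 * r * cos lam"
  by (simp add: ma_coeff_def sin_double)

lemma ma_coeff_Suc_Suc:
  assumes "sin lam \<noteq> 0"
  shows "ma_coeff r lam (Suc (Suc m)) = 2 * r * cos lam * ma_coeff r lam (Suc m) - r\<^sup>2 * ma_coeff r lam m"
proof -
  have "sin (x + lam) = 2 * cos lam * sin x - sin (x - lam)" for x
    by (simp add: sin_add sin_diff algebra_simps)
  from this[of "real (Suc m + 1) * lam"]
  have sin_step: "sin (real (Suc (Suc m) + 1) * lam) = 2 * cos lam * sin (real (Suc m + 1) * lam) - sin (real (m + 1) * lam)"
    by (simp add: algebra_simps)
  have "r ^ Suc (Suc m) * sin (real (Suc (Suc m) + 1) * lam)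
      = 2 * r * cos lam * (r ^ Suc m * sin (real (Suc m + 1) * lam)) - r\<^sup>2 * (r ^ m * sin (real (m + 1) * lam))"
    unfolding sin_step by (simp add: algebra_simps power2_eq_square)
  then show ?thesis
    unfolding ma_coeff_def by (simp add: diff_divide_distrib)
qed

lemma abs_ma_coeff_le:
  assumes "0 < lam" "lam < pi" "0 \<le> r"
  shows "\<bar>ma_coeff r lam m\<bar> \<le> r ^ m / sin lam"
proof -
  have "sin lam > 0" using assms sin_gt_zero by blast
  with assms show ?thesis
    by (simp add: ma_coeff_def abs_mult divide_right_mono mult_left_le)
qed

lemma
  assumes "0 < lam" "lam < pi" "0 \<le> r" "r < 1"
  shows summable_abs_ma_coeff: "summable (\<lambda>m. \<bar>ma_coeff r lam m\<bar>)"
    and suminf_abs_ma_coeff_le: "(\<Sum>m. \<bar>ma_coeff r lam m\<bar>) \<le> 1 / ((1 - r) * sin lam)"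
proof -
  have geom: "summable (\<lambda>m. r ^ m / sin lam)"
    using assms by (intro summable_divide summable_geometric) auto
  show sm: "summable (\<lambda>m. \<bar>ma_coeff r lam m\<bar>)"
    by (rule summable_comparison_test[OF _ geom]) (use abs_ma_coeff_le[OF assms(1-3)] in auto)
  have "(\<Sum>m. \<bar>ma_coeff r lam m\<bar>) \<le> (\<Sum>m. r ^ m / sin lam)"
    by (rule suminf_le[OF _ sm geom]) (use abs_ma_coeff_le[OF assms(1-3)] in auto)
  also have "\<dots> = 1 / ((1 - r) * sin lam)"
    using assms by (simp add: suminf_divide summable_geometric suminf_geometric)
  finally show "(\<Sum>m. \<bar>ma_coeff r lam m\<bar>) \<le> 1 / ((1 - r) * sin lam)" .
qed

definition ar2_filter :: "real \<Rightarrow> real \<Rightarrow> (nat \<Rightarrow> real) \<Rightarrow> nat \<Rightarrow> real" where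
  "ar2_filter r lam u m = u m - 2 * r * cos lam * u (Suc m) + r\<^sup>2 * u (Suc (Suc m))"

lemma sum_ma_coeff_ar2_filter:
  assumes "sin lam \<noteq> 0"
  shows "(\<Sum>m<Suc N. ma_coeff r lam m * ar2_filter r lam u m)
      = u 0 - ma_coeff r lam (Suc N) * u (Suc N) + r\<^sup>2 * ma_coeff r lam N * u (Suc (Suc N))"
  using assms
  by (induction N) (simp_all add: ar2_filter_def ma_coeff_Suc_Suc algebra_simps)

lemma ma_coeff_inverts_ar2_filter:
  assumes "0 < lam" "lam < pi" "0 \<le> r" "r < 1" and bounded: "\<And>m. \<bar>u m\<bar> \<le> B"
  shows "(\<lambda>m. ma_coeff r lam m * ar2_filter r lam u m) sums u 0"
proof -
  have "sin lam \<noteq> 0" using assms sin_gt_zero by force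
  have "summable (ma_coeff r lam)"
    using summable_abs_ma_coeff[OF assms(1-4)] summable_rabs_cancel by blast
  then have to0: "ma_coeff r lam \<longlonglongrightarrow> 0" by (rule summable_LIMSEQ_zero)
  have "(\<lambda>N. ma_coeff r lam (Suc N) * u (Suc N)) \<longlonglongrightarrow> 0"
    by (rule lim_null_mult_right_bounded[OF LIMSEQ_Suc[OF to0], of _ B]) (use bounded in auto)
  moreover have "(\<lambda>N. r\<^sup>2 * ma_coeff r lam N * u (Suc (Suc N))) \<longlonglongrightarrow> 0"
    by (rule lim_null_mult_right_bounded[OF tendsto_mult_right_zero[OF to0], of _ B]) (use bounded in auto)
  ultimately have "(\<lambda>N. u 0 - ma_coeff r lam (Suc N) * u (Suc N) + r\<^sup>2 * ma_coeff r lam N * u (Suc (Suc N)))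
      \<longlonglongrightarrow> u 0 - 0 + 0"
    by (intro tendsto_intros)
  then have "(\<lambda>N. u 0 - ma_coeff r lam (Suc N) * u (Suc N) + r\<^sup>2 * ma_coeff r lam N * u (Suc (Suc N)))
      \<longlonglongrightarrow> u 0"
    by simp
  then have "(\<lambda>N. \<Sum>m<Suc N. ma_coeff r lam m * ar2_filter r lam u m) \<longlonglongrightarrow> u 0"
    by (simp only: sum_ma_coeff_ar2_filter[OF \<open>sin lam \<noteq> 0\<close>])
  then show ?thesis unfolding sums_def by (rule LIMSEQ_imp_Suc)
qed

(* The filter 1 - 2 r cos lam B + r^2 B^2 followed by its adjoint, acting on an autocovariance;
   its transfer function is the denominator of f_delta for r = 1 - delta. *)
definition ar2_autocov_filter :: "real \<Rightarrow> real \<Rightarrow> (int \<Rightarrow> real) \<Rightarrow> int \<Rightarrow> real" where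
  "ar2_autocov_filter r lam g k = (1 + (2*r*cos lam)\<^sup>2 + r^4) * g k
     - 2*r*cos lam * (1 + r\<^sup>2) * (g (k+1) + g (k-1)) + r\<^sup>2 * (g (k+2) + g (k-2))"

lemma ar2_recurrence_ma_representation:
  fixes g gU :: "int \<Rightarrow> real"
  assumes lam: "0 < lam" "lam < pi" and r: "0 \<le> r" "r < 1"
    and bounded: "\<And>k. \<bar>g k\<bar> \<le> B"
    and rec: "gU = ar2_autocov_filter r lam g"
  obtains v where "\<And>k. (\<lambda>m. ma_coeff r lam m * gU (k + int m)) sums v k"
    and "\<And>k. (\<lambda>m. ma_coeff r lam m * v (k - int m)) sums g k"
proof
  define c where "c = 2 * r * cos lam"
  define v where "v k = g k - c * g (k - 1) + r\<^sup>2 * g (k - 2)" for k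
  have "\<bar>c\<bar> \<le> 2" using r unfolding c_def
    by (auto simp: abs_mult intro!: mult_le_one abs_cos_le_one)
  then have cg: "\<bar>c * g k\<bar> \<le> 2 * B" for k
    unfolding abs_mult using bounded[of k] by (intro mult_mono) auto
  have rg: "\<bar>r\<^sup>2 * g k\<bar> \<le> B" for k
  proof -
    have "\<bar>r\<^sup>2 * g k\<bar> \<le> \<bar>g k\<bar>"
      unfolding abs_mult using r by (intro mult_left_le_one_le) (auto simp: power_le_one)
    with bounded[of k] show ?thesis by linarith
  qed
  have v_bounded: "\<bar>v k\<bar> \<le> 4 * B" for k
    unfolding v_def using cg[of "k - 1"] rg[of "k - 2"] bounded[of k] by linarith
  show "(\<lambda>m. ma_coeff r lam m * gU (k + int m)) sums v k" for k
  proof -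
    have "ar2_filter r lam (\<lambda>m. v (k + int m)) m = gU (k + int m)" for m
      unfolding ar2_filter_def v_def rec ar2_autocov_filter_def c_def
      by (simp add: algebra_simps power2_eq_square power4_eq_xxxx)
    then show ?thesis
      using ma_coeff_inverts_ar2_filter[OF lam r, of "\<lambda>m. v (k + int m)" "4 * B"] v_bounded by simp
  qed
  show "(\<lambda>m. ma_coeff r lam m * v (k - int m)) sums g k" for k
  proof -
    have "ar2_filter r lam (\<lambda>m. g (k - int m)) m = v (k - int m)" for m
      unfolding ar2_filter_def v_def c_def by (simp add: algebra_simps)
    then show ?thesis
      using ma_coeff_inverts_ar2_filter[OF lam r, of "\<lambda>m. g (k - int m)" B] bounded by simp
  qed
qed

section \<open>Quadratic forms in an autocovariance\<close>

lemma abs_quadratic_form_shift_le: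
  fixes w c :: "int \<Rightarrow> real"
  assumes w: "(\<lambda>k. \<bar>w k\<bar>) summable_on UNIV" and A: "finite A" and c: "\<And>t. t \<in> A \<Longrightarrow> \<bar>c t\<bar> \<le> 1"
  shows "\<bar>\<Sum>s\<in>A. \<Sum>t\<in>A. c s * c t * w (t - s + j)\<bar> \<le> real (card A) * (\<Sum>\<^sub>\<infinity>k. \<bar>w k\<bar>)"
proof -
  have row: "(\<Sum>t\<in>A. \<bar>w (t + i)\<bar>) \<le> (\<Sum>\<^sub>\<infinity>k. \<bar>w k\<bar>)" for i
  proof -
    have "(\<Sum>t\<in>A. \<bar>w (t + i)\<bar>) = (\<Sum>k\<in>(\<lambda>t. t + i) ` A. \<bar>w k\<bar>)"
      by (simp add: sum.reindex inj_on_def)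
    also have "\<dots> = (\<Sum>\<^sub>\<infinity>k\<in>(\<lambda>t. t + i) ` A. \<bar>w k\<bar>)"
      using A by simp
    also have "\<dots> \<le> (\<Sum>\<^sub>\<infinity>k. \<bar>w k\<bar>)"
      by (rule infsum_mono_neutral) (use A w in auto)
    finally show ?thesis .
  qed
  have "\<bar>\<Sum>s\<in>A. \<Sum>t\<in>A. c s * c t * w (t - s + j)\<bar> \<le> (\<Sum>s\<in>A. \<Sum>t\<in>A. \<bar>c s * c t * w (t - s + j)\<bar>)"
    by (rule order.trans[OF sum_abs sum_mono[OF sum_abs]])
  also have "\<dots> \<le> (\<Sum>s\<in>A. \<Sum>t\<in>A. \<bar>w (t + (j - s))\<bar>)"
  proof (intro sum_mono)
    fix s t assume "s \<in> A" "t \<in> A"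
    then have "\<bar>c s * c t\<bar> \<le> 1" using c by (simp add: abs_mult mult_le_one)
    then have "\<bar>c s * c t\<bar> * \<bar>w (t - s + j)\<bar> \<le> \<bar>w (t - s + j)\<bar>"
      by (intro mult_left_le_one_le) auto
    then show "\<bar>c s * c t * w (t - s + j)\<bar> \<le> \<bar>w (t + (j - s))\<bar>"
      by (simp add: abs_mult algebra_simps)
  qed
  also have "\<dots> \<le> (\<Sum>s\<in>A. \<Sum>\<^sub>\<infinity>k. \<bar>w k\<bar>)"
    by (intro sum_mono row)
  finally show ?thesis by simp
qed

lemma abs_quadratic_form_series_le:
  fixes a :: "nat \<Rightarrow> real" and w g c :: "int \<Rightarrow> real" and d :: "nat \<Rightarrow> int"
  assumes a: "summable (\<lambda>m. \<bar>a m\<bar>)" and g: "\<And>k. (\<lambda>m. a m * w (k + d m)) sums g k"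
    and B: "\<And>j. \<bar>\<Sum>s\<in>A. \<Sum>t\<in>A. c s * c t * w (t - s + j)\<bar> \<le> B"
  shows "\<bar>\<Sum>s\<in>A. \<Sum>t\<in>A. c s * c t * g (t - s + j)\<bar> \<le> (\<Sum>m. \<bar>a m\<bar>) * B"
proof -
  define Q where "Q i = (\<Sum>s\<in>A. \<Sum>t\<in>A. c s * c t * w (t - s + i))" for i
  have "(\<lambda>m. \<Sum>s\<in>A. \<Sum>t\<in>A. c s * c t * (a m * w (t - s + j + d m))) sums (\<Sum>s\<in>A. \<Sum>t\<in>A. c s * c t * g (t - s + j))"
    by (intro sums_sum sums_mult g)
  then have sums: "(\<lambda>m. a m * Q (j + d m)) sums (\<Sum>s\<in>A. \<Sum>t\<in>A. c s * c t * g (t - s + j))"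
    unfolding Q_def by (simp add: sum_distrib_left algebra_simps)
  have "\<bar>\<Sum>m. a m * Q (j + d m)\<bar> \<le> (\<Sum>m. \<bar>a m\<bar> * B)"
    unfolding real_norm_def[symmetric]
    by (rule norm_suminf_le) (use a B in \<open>auto simp: Q_def abs_mult intro: mult_left_mono summable_mult2\<close>)
  then show ?thesis
    using sums a by (simp add: sums_iff suminf_mult2)
qed

lemma abs_quadratic_form_ar2_le:
  fixes g gU c :: "int \<Rightarrow> real"
  assumes lam: "0 < lam" "lam < pi" and r: "0 \<le> r" "r < 1"
    and bounded: "\<And>k. \<bar>g k\<bar> \<le> B"
    and rec: "gU = ar2_autocov_filter r lam g"
    and gU: "(\<lambda>k. \<bar>gU k\<bar>) summable_on UNIV"
    and A: "finite A" and c: "\<And>t. t \<in> A \<Longrightarrow> \<bar>c t\<bar> \<le> 1"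
  shows "\<bar>\<Sum>s\<in>A. \<Sum>t\<in>A. c s * c t * g (t - s)\<bar>
           \<le> real (card A) * (\<Sum>\<^sub>\<infinity>k. \<bar>gU k\<bar>) / ((1 - r) * sin lam)\<^sup>2"
proof -
  obtain v where v: "\<And>k. (\<lambda>m. ma_coeff r lam m * gU (k + int m)) sums v k"
    and g: "\<And>k. (\<lambda>m. ma_coeff r lam m * v (k + - int m)) sums g k"
    using ar2_recurrence_ma_representation[OF lam r bounded rec] by auto
  define P where "P = (\<Sum>m. \<bar>ma_coeff r lam m\<bar>)"
  have summable: "summable (\<lambda>m. \<bar>ma_coeff r lam m\<bar>)"
    by (rule summable_abs_ma_coeff[OF lam r])
  have P: "0 \<le> P" "P \<le> 1 / ((1 - r) * sin lam)"
    unfolding P_def using summable suminf_abs_ma_coeff_le[OF lam r] by (auto intro: suminf_nonneg)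
  have "\<bar>\<Sum>s\<in>A. \<Sum>t\<in>A. c s * c t * v (t - s + j)\<bar> \<le> P * (real (card A) * (\<Sum>\<^sub>\<infinity>k. \<bar>gU k\<bar>))" for j
    unfolding P_def by (rule abs_quadratic_form_series_le[OF summable v abs_quadratic_form_shift_le[OF gU A c]])
  from abs_quadratic_form_series_le[OF summable g this, of 0]
  have "\<bar>\<Sum>s\<in>A. \<Sum>t\<in>A. c s * c t * g (t - s)\<bar> \<le> P * (P * (real (card A) * (\<Sum>\<^sub>\<infinity>k. \<bar>gU k\<bar>)))"
    by (simp add: P_def)
  also have "\<dots> \<le> (1 / ((1 - r) * sin lam)) * ((1 / ((1 - r) * sin lam)) * (real (card A) * (\<Sum>\<^sub>\<infinity>k. \<bar>gU k\<bar>)))"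
    using P lam r sin_gt_zero[of lam] by (intro mult_mono mult_nonneg_nonneg) (auto intro: infsum_nonneg)
  finally show ?thesis by (simp add: power2_eq_square)
qed

section \<open>Autocovariance recurrence from the spectral density\<close>

lemma cmod_one_minus_cis_sq: "(cmod (1 - complex_of_real r * cis t))\<^sup>2 = 1 - 2 * r * cos t + r\<^sup>2"
proof -
  have "Re (1 - complex_of_real r * cis t) = 1 - r * cos t" "Im (1 - complex_of_real r * cis t) = - (r * sin t)"
    by simp_all
  moreover have "sin t ^ 2 + cos t ^ 2 = 1" by simp
  ultimately show ?thesis unfolding cmod_power2 by algebra
qed

lemma ar2_transfer_denominator:
  "(cmod (1 - complex_of_real r * cis (- (l - lam))))\<^sup>2 * (cmod (1 - complex_of_real r * cis (- (l + lam))))\<^sup>2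
     = (1 + (2*r*cos lam)\<^sup>2 + r^4) + 2 * (- 2*r*cos lam * (1 + r\<^sup>2)) * cos l + 2 * r\<^sup>2 * cos (2 * l)"
proof -
  have "sin l ^ 2 = 1 - cos l ^ 2" "sin lam ^ 2 = 1 - cos lam ^ 2" "cos (2 * l) = 2 * cos l ^ 2 - 1"
    by (simp_all add: sin_squared_eq cos_double_cos)
  then show ?thesis
    unfolding cmod_one_minus_cis_sq cos_minus cos_diff cos_add by algebra
qed

lemma f_delta_mult_transfer:
  assumes "0 < \<delta>" "\<delta> < 1"
  defines "r \<equiv> 1 - \<delta>"
  shows "f_delta fU lam \<delta> l * ((1 + (2*r*cos lam)\<^sup>2 + r^4) + 2 * (- 2*r*cos lam * (1 + r\<^sup>2)) * cos l
      + 2 * r\<^sup>2 * cos (2 * l)) = fU l"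
proof -
  have "1 - complex_of_real r * cis t \<noteq> 0" for t
  proof
    assume "1 - complex_of_real r * cis t = 0"
    then have "cmod (complex_of_real r * cis t) = 1" by (metis norm_one right_minus_eq)
    then have "\<bar>r\<bar> = 1" by (simp add: norm_mult)
    then show False using assms unfolding r_def by (auto simp: abs_if split: if_splits)
  qed
  then have "(cmod (1 - complex_of_real r * cis (- (l - lam))))\<^sup>2
      * (cmod (1 - complex_of_real r * cis (- (l + lam))))\<^sup>2 \<noteq> 0"
    by simp
  then show ?thesis
    unfolding ar2_transfer_denominator[symmetric] by (simp add: f_delta_def r_def)
qed

lemma cis_mult_cos_polynomial:
  "cis (of_int k * l) * complex_of_real (a0 + 2 * a1 * cos l + 2 * a2 * cos (2 * l))
     = a0 * cis (of_int k * l) + a1 * (cis (of_int (k + 1) * l) + cis (of_int (k - 1) * l))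
       + a2 * (cis (of_int (k + 2) * l) + cis (of_int (k - 2) * l))"
proof -
  have cis_cos: "2 * (cis a * complex_of_real (cos b)) = cis (a + b) + cis (a - b)" for a b
    by (simp add: complex_eq_iff cos_add cos_diff sin_add sin_diff)
  have "cis (of_int k * l) * complex_of_real (a0 + 2 * a1 * cos l + 2 * a2 * cos (2 * l))
      = a0 * cis (of_int k * l) + a1 * (2 * (cis (of_int k * l) * complex_of_real (cos l)))
        + a2 * (2 * (cis (of_int k * l) * complex_of_real (cos (2 * l))))"
    by (simp add: algebra_simps)
  then show ?thesis
    unfolding cis_cos by (simp add: algebra_simps)
qed

lemma spectral_density_f_delta_recurrence:
  fixes gU g :: "int \<Rightarrow> real"
  assumes U: "spectral_density gU fU" and X: "spectral_density g (f_delta fU lam \<delta>)"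
    and \<delta>: "0 < \<delta>" "\<delta> < 1"
  shows "gU = ar2_autocov_filter (1 - \<delta>) lam g"
proof
  fix k
  define r where "r = 1 - \<delta>"
  define a0 where "a0 = 1 + (2*r*cos lam)\<^sup>2 + r^4"
  define a1 where "a1 = - 2*r*cos lam * (1 + r\<^sup>2)"
  define a2 where "a2 = r\<^sup>2"
  define F where "F j l = cis (of_int j * l) * complex_of_real (f_delta fU lam \<delta> l)" for j l
  have F: "(F j has_integral g j) {-pi..pi}" for j
    using X unfolding spectral_density_def F_def by blast
  have "cis (of_int k * l) * complex_of_real (fU l)
      = a0 * F k l + a1 * (F (k+1) l + F (k-1) l) + a2 * (F (k+2) l + F (k-2) l)" for l
  proof -
    have "fU l = f_delta fU lam \<delta> l * (a0 + 2 * a1 * cos l + 2 * a2 * cos (2 * l))"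
      using f_delta_mult_transfer[OF \<delta>, of fU lam l] unfolding a0_def a1_def a2_def r_def by (rule sym)
    then have "cis (of_int k * l) * complex_of_real (fU l) = complex_of_real (f_delta fU lam \<delta> l)
        * (cis (of_int k * l) * complex_of_real (a0 + 2 * a1 * cos l + 2 * a2 * cos (2 * l)))"
      by (subst \<open>fU l = _\<close>) (simp only: of_real_mult mult_ac)
    then show ?thesis
      unfolding cis_mult_cos_polynomial F_def by (simp add: algebra_simps)
  qed
  moreover have "((\<lambda>l. a0 * F k l + a1 * (F (k+1) l + F (k-1) l) + a2 * (F (k+2) l + F (k-2) l))
      has_integral (a0 * g k + a1 * (g (k+1) + g (k-1)) + a2 * (g (k+2) + g (k-2)))) {-pi..pi}"
    unfolding of_real_add of_real_mult by (intro has_integral_add has_integral_mult_right F)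
  moreover have "((\<lambda>l. cis (of_int k * l) * complex_of_real (fU l)) has_integral gU k) {-pi..pi}"
    using U unfolding spectral_density_def by blast
  ultimately have "complex_of_real (gU k)
      = complex_of_real (a0 * g k + a1 * (g (k+1) + g (k-1)) + a2 * (g (k+2) + g (k-2)))"
    by (simp add: has_integral_unique)
  then show "gU k = ar2_autocov_filter (1 - \<delta>) lam g k"
    unfolding of_real_eq_iff a0_def a1_def a2_def ar2_autocov_filter_def r_def by (simp add: algebra_simps)
qed

section \<open>The periodogram autocovariance is circular\<close>

lemma cmod_sum_cis_sq:
  fixes x a :: "'i \<Rightarrow> real"
  shows "(cmod (\<Sum>t\<in>A. complex_of_real (x t) * cis (a t)))\<^sup>2 = (\<Sum>s\<in>A. \<Sum>t\<in>A. x s * x t * cos (a s - a t))"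
proof -
  define z where "z = (\<Sum>t\<in>A. complex_of_real (x t) * cis (a t))"
  have "complex_of_real ((cmod z)\<^sup>2) = z * cnj z"
    by (rule complex_norm_square)
  also have "\<dots> = (\<Sum>s\<in>A. \<Sum>t\<in>A. complex_of_real (x s * x t) * cis (a s - a t))"
  proof -
    have "cis (u - v) = cis u * cis (- v)" for u v by (simp add: cis_mult)
    then show ?thesis unfolding z_def by (simp add: cis_cnj sum_product algebra_simps)
  qed
  finally have "(cmod z)\<^sup>2 = Re (\<Sum>s\<in>A. \<Sum>t\<in>A. complex_of_real (x s * x t) * cis (a s - a t))"
    by (metis Re_complex_of_real)
  then show ?thesis
    by (simp add: z_def)
qed

lemma periodogram_eq_double_sum:
  "periodogram n X \<omega> l
     = (\<Sum>s\<in>{1..int n}. \<Sum>t\<in>{1..int n}. X s \<omega> * X t \<omega> * cos (l * of_int (t - s))) / (2 * pi * real n)"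
  unfolding periodogram_def cmod_sum_cis_sq by (simp add: algebra_simps)

lemma sum_cos_roots_of_unity:
  assumes "n \<ge> 1"
  shows "(\<Sum>j<n. cos (real j * (2 * pi * of_int m / real n))) = (if int n dvd m then real n else 0)"
proof (cases "int n dvd m")
  case True
  then obtain k where "m = int n * k" ..
  then have "real j * (2 * pi * of_int m / real n) = 2 * pi * of_int (int j * k)" for j
    using assms by (simp add: field_simps)
  then show ?thesis using True by (simp only: cos_int_2pin) simp
next
  case False
  define z where "z = cis (2 * pi * of_int m / real n)"
  have z_pow: "z ^ j = cis (real j * (2 * pi * of_int m / real n))" for j
    unfolding z_def by (rule Complex.DeMoivre)
  have "z ^ n = 1"
    using assms unfolding z_pow by (simp add: complex_eq_iff)
  moreover have "z \<noteq> 1"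
  proof
    assume "z = 1"
    then have "cos (2 * pi * of_int m / real n) = 1"
      unfolding z_def by (metis cis.sel(1) one_complex.sel(1))
    then obtain k :: int where "2 * pi * of_int m / real n = of_int k * 2 * pi"
      using cos_one_2pi_int by blast
    then have "real_of_int m = real_of_int (k * int n)" using assms by (simp add: field_simps)
    then show False using False by (simp only: of_int_eq_iff) simp
  qed
  ultimately have "Re (\<Sum>j<n. z ^ j) = 0" by (simp add: geometric_sum)
  then show ?thesis using False unfolding z_pow by simp
qed

lemma sum_symmetric_range_periodic:
  fixes f :: "int \<Rightarrow> real"
  assumes "n \<ge> 1" and periodic: "\<And>j. f (j + int n) = f j"
  shows "(\<Sum>j\<in>{- int (n div 2) .. int (n div 2)}. f j)
       = (\<Sum>j<n. f (int j)) + (if even n then f (int (n div 2)) else 0)"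
proof -
  define N where "N = int (n div 2)"
  have "{-N..N} = {-N..-1} \<union> {0..N}" by (auto simp: N_def)
  then have "(\<Sum>j\<in>{-N..N}. f j) = (\<Sum>j\<in>{-N..-1}. f j) + (\<Sum>j\<in>{0..N}. f j)"
    by (simp add: sum.union_disjoint)
  also have "(\<Sum>j\<in>{-N..-1}. f j) = (\<Sum>j\<in>{int n - N..int n - 1}. f j)"
    by (rule sum.reindex_bij_witness[of _ "\<lambda>j. j - int n" "\<lambda>j. j + int n"]) (auto simp: periodic)
  also have "(\<Sum>j<n. f (int j)) = (\<Sum>j\<in>{0..int n - 1}. f j)"
    by (rule sum.reindex_bij_witness[of _ nat int]) auto
  moreover have "{0..int n - 1} = {0..int n - N - 1} \<union> {int n - N..int n - 1}"
    by (auto simp: N_def)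
  then have "(\<Sum>j\<in>{0..int n - 1}. f j) = (\<Sum>j\<in>{0..int n - N - 1}. f j) + (\<Sum>j\<in>{int n - N..int n - 1}. f j)"
    by (simp add: sum.union_disjoint)
  moreover have "int n - N - 1 = (if even n then N - 1 else N)"
    unfolding N_def by (cases "even n") (auto elim!: evenE oddE)
  then have "(\<Sum>j\<in>{0..N}. f j) = (\<Sum>j\<in>{0..int n - N - 1}. f j) + (if even n then f N else 0)"
  proof (cases "even n")
    case True
    have "{0..N} = insert N {0..N - 1}" by (auto simp: N_def)
    with True \<open>int n - N - 1 = _\<close> show ?thesis by simp
  next
    case False
    with \<open>int n - N - 1 = _\<close> have "int n - N - 1 = N" by simp
    with False show ?thesis by (simp only:) simp
  qed
  ultimately show ?thesis unfolding N_def by simp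
qed

definition fourier_cos_kernel :: "nat \<Rightarrow> int \<Rightarrow> real" where
  "fourier_cos_kernel n m = (\<Sum>j\<in>Gset n. cos (fourier_freq n j * of_int m))"

(* Gset n omits the frequency 0, hence the -1; for even n it contains the Nyquist frequency pi
   twice, as j = n div 2 and j = -(n div 2). *)
lemma fourier_cos_kernel_eq:
  assumes "n \<ge> 1"
  shows "fourier_cos_kernel n m = (if int n dvd m then real n else 0) - 1 + (if even n then cos (pi * of_int m) else 0)"
proof -
  define f where "f j = cos (fourier_freq n j * of_int m)" for j
  have "f (j + int n) = f j" for j
  proof -
    have "fourier_freq n (j + int n) * of_int m = fourier_freq n j * of_int m + 2 * pi * of_int m"
      using assms by (simp add: fourier_freq_def field_simps)
    then show ?thesis unfolding f_def by (simp add: cos_add)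
  qed
  then have "fourier_cos_kernel n m = (\<Sum>j<n. f (int j)) + (if even n then f (int (n div 2)) else 0) - f 0"
    unfolding fourier_cos_kernel_def Gset_def f_def[symmetric]
    by (simp add: sum_diff1 sum_symmetric_range_periodic[OF assms])
  moreover have "(\<Sum>j<n. f (int j)) = (if int n dvd m then real n else 0)"
    unfolding f_def fourier_freq_def sum_cos_roots_of_unity[OF assms, symmetric]
    by (intro sum.cong refl) (simp add: field_simps)
  moreover have "f (int (n div 2)) = cos (pi * of_int m)" if "even n"
  proof -
    from that obtain b where "n = 2 * b" ..
    then have "fourier_freq n (int (n div 2)) * of_int m = pi * of_int m"
      using assms by (simp add: fourier_freq_def)
    then show ?thesis unfolding f_def by (rule arg_cong[where f = cos])
  qed
  ultimately show ?thesis by (simp add: f_def fourier_freq_def)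
qed

lemma fourier_cos_kernel_minus: "fourier_cos_kernel n (- m) = fourier_cos_kernel n m"
  by (simp add: fourier_cos_kernel_def)

lemma gamma_hat_abs: "gamma_hat n X \<bar>h\<bar> \<omega> = gamma_hat n X h \<omega>"
  by (cases "h \<ge> 0") (simp_all add: gamma_hat_def)

lemma gamma_hat_eq_kernel_sum:
  assumes "n \<ge> 1"
  shows "gamma_hat n X h \<omega>
     = (\<Sum>s\<in>{1..int n}. \<Sum>t\<in>{1..int n}. X s \<omega> * X t \<omega> * fourier_cos_kernel n (t - s - h)) / real n ^ 2"
proof -
  define A where "A = {1..int n}"
  define x where "x t = X t \<omega>" for t
  define K where "K = fourier_cos_kernel n"
  have "(\<Sum>s\<in>A. \<Sum>t\<in>A. x s * x t * K (t - s + h)) = (\<Sum>t\<in>A. \<Sum>s\<in>A. x s * x t * K (t - s + h))"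
    by (rule sum.swap)
  also have "\<dots> = (\<Sum>s\<in>A. \<Sum>t\<in>A. x s * x t * K (t - s - h))"
  proof -
    have "K (t - s + h) = K (s - t - h)" for s t
      using fourier_cos_kernel_minus[of n "s - t - h"] by (simp add: K_def algebra_simps)
    then show ?thesis by (simp add: mult.commute)
  qed
  finally have swap: "(\<Sum>s\<in>A. \<Sum>t\<in>A. x s * x t * K (t - s + h)) = (\<Sum>s\<in>A. \<Sum>t\<in>A. x s * x t * K (t - s - h))" .
  have product: "cos (l * of_int (t - s)) * cos (l * of_int h) = (cos (l * of_int (t - s + h)) + cos (l * of_int (t - s - h))) / 2"
    for l :: real and t s :: int
    unfolding cos_times_cos by (simp add: algebra_simps)
  have "gamma_hat n X h \<omega>
      = (\<Sum>s\<in>A. \<Sum>t\<in>A. x s * x t *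
          (\<Sum>j\<in>Gset n. cos (fourier_freq n j * of_int (t - s)) * cos (fourier_freq n j * of_int h)))
        / real n ^ 2"
    using assms unfolding gamma_hat_def periodogram_eq_double_sum A_def x_def
    by (simp add: sum_distrib_left sum_distrib_right sum_divide_distrib power2_eq_square algebra_simps sum.swap[of _ "Gset n"])
  also have "\<dots> = (\<Sum>s\<in>A. \<Sum>t\<in>A. x s * x t * K (t - s + h) + x s * x t * K (t - s - h)) / (2 * real n ^ 2)"
    unfolding product K_def fourier_cos_kernel_def
    by (simp add: sum_divide_distrib[symmetric] sum.distrib sum_distrib_left algebra_simps)
  also have "\<dots> = (\<Sum>s\<in>A. \<Sum>t\<in>A. x s * x t * K (t - s - h)) / real n ^ 2"
    by (simp add: sum.distrib swap)
  finally show ?thesis unfolding A_def x_def K_def .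
qed

lemma sum_pairs_at_lag:
  fixes x :: "int \<Rightarrow> real"
  assumes "0 \<le> H"
  shows "(\<Sum>s\<in>{1..int n}. \<Sum>t\<in>{1..int n}. if t = s + H then x s * x t else 0)
       = (\<Sum>t = 1..int n - H. x t * x (t + H))"
proof -
  have "(\<Sum>s\<in>{1..int n}. \<Sum>t\<in>{1..int n}. if t = s + H then x s * x t else 0)
      = (\<Sum>s\<in>{1..int n}. if s + H \<in> {1..int n} then x s * x (s + H) else 0)"
    by (intro sum.cong refl) simp
  also have "\<dots> = (\<Sum>s\<in>{s\<in>{1..int n}. s + H \<in> {1..int n}}. x s * x (s + H))"
    by (rule sum.inter_filter[symmetric]) simp
  also have "{s\<in>{1..int n}. s + H \<in> {1..int n}} = {1..int n - H}"
    using assms by auto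
  finally show ?thesis .
qed

lemma dvd_lag_iff:
  fixes s t H :: int
  assumes "s \<in> {1..int n}" "t \<in> {1..int n}" "0 \<le> H" "H < int n"
  shows "int n dvd (t - s - H) \<longleftrightarrow> t = s + H \<or> t = s + H - int n"
proof
  assume "int n dvd (t - s - H)"
  then obtain k where k: "t - s - H = int n * k" ..
  have "k < 1"
  proof (rule ccontr)
    assume "\<not> k < 1"
    then have "int n * k \<ge> int n * 1" using assms by (intro mult_left_mono) auto
    then show False using k assms unfolding atLeastAtMost_iff by linarith
  qed
  moreover have "k > -2"
  proof (rule ccontr)
    assume "\<not> k > -2"
    then have "int n * k \<le> int n * (-2)" using assms by (intro mult_left_mono) auto
    then show False using k assms unfolding atLeastAtMost_iff by linarith
  qed
  ultimately have "k = 0 \<or> k = -1" by linarith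
  with k show "t = s + H \<or> t = s + H - int n" by auto
qed auto

lemma sum_pairs_dvd_lag:
  fixes x :: "int \<Rightarrow> real"
  assumes "0 \<le> H" "H < int n"
  shows "(\<Sum>s\<in>{1..int n}. \<Sum>t\<in>{1..int n}. if int n dvd (t - s - H) then x s * x t else 0)
       = (\<Sum>t = 1..int n - H. x t * x (t + H)) + (\<Sum>t = 1..H. x t * x (t + (int n - H)))"
proof -
  define A where "A = {1..int n}"
  have "(\<Sum>s\<in>A. \<Sum>t\<in>A. if int n dvd (t - s - H) then x s * x t else 0)
      = (\<Sum>s\<in>A. \<Sum>t\<in>A. (if t = s + H then x s * x t else 0) + (if s = t + (int n - H) then x t * x s else 0))"
  proof (intro sum.cong refl)
    fix s t assume "s \<in> A" "t \<in> A"
    then show "(if int n dvd (t - s - H) then x s * x t else 0)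
        = (if t = s + H then x s * x t else 0) + (if s = t + (int n - H) then x t * x s else 0)"
      using dvd_lag_iff[of s n t H] assms by (auto simp: A_def)
  qed
  also have "\<dots> = (\<Sum>s\<in>A. \<Sum>t\<in>A. if t = s + H then x s * x t else 0)
      + (\<Sum>s\<in>A. \<Sum>t\<in>A. if s = t + (int n - H) then x t * x s else 0)"
    by (simp only: sum.distrib)
  also have "(\<Sum>s\<in>A. \<Sum>t\<in>A. if s = t + (int n - H) then x t * x s else 0)
      = (\<Sum>t\<in>A. \<Sum>s\<in>A. if s = t + (int n - H) then x t * x s else 0)"
    by (rule sum.swap)
  also have "(\<Sum>t\<in>A. \<Sum>s\<in>A. if s = t + (int n - H) then x t * x s else 0)
      = (\<Sum>t = 1..H. x t * x (t + (int n - H)))"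
  proof -
    have "0 \<le> int n - H" "int n - (int n - H) = H" using assms by simp_all
    then show ?thesis unfolding A_def using sum_pairs_at_lag[where H = "int n - H" and n = n and x = x] by simp
  qed
  finally show ?thesis
    unfolding A_def sum_pairs_at_lag[OF assms(1)] .
qed

lemma cos_pi_int_diff: "cos (pi * of_int (a - b)) = cos (pi * of_int a) * cos (pi * of_int b)"
  using sin_npi_int[of a] by (simp add: cos_diff algebra_simps)

lemma gamma_hat_eq_circular:
  assumes "\<bar>h\<bar> < int n"
  shows "gamma_hat n X h \<omega> = gamma_tilde n X h \<omega> + gamma_tilde n X (int n - \<bar>h\<bar>) \<omega>
      - (\<Sum>t\<in>{1..int n}. X t \<omega>)\<^sup>2 / real n ^ 2
      + (if even n then cos (pi * of_int h) * (\<Sum>t\<in>{1..int n}. cos (pi * of_int t) * X t \<omega>)\<^sup>2 / real n ^ 2 else 0)"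
proof -
  define H where "H = \<bar>h\<bar>"
  define A where "A = {1..int n}"
  define x where "x t = X t \<omega>" for t
  define c where "c t = cos (pi * of_int t)" for t
  define e :: real where "e = (if even n then cos (pi * of_int H) else 0)"
  have n: "n \<ge> 1" and H: "0 \<le> H" "H < int n" using assms by (auto simp: H_def)
  have "x s * x t * fourier_cos_kernel n (t - s - H)
      = real n * (if int n dvd (t - s - H) then x s * x t else 0) - x s * x t + e * ((c s * x s) * (c t * x t))" for s t
    unfolding fourier_cos_kernel_eq[OF n] cos_pi_int_diff e_def c_def by (simp add: algebra_simps)
  moreover have square: "(\<Sum>t\<in>A. f t)\<^sup>2 = (\<Sum>s\<in>A. \<Sum>t\<in>A. f s * f t)" for f :: "int \<Rightarrow> real"
    by (simp add: power2_eq_square sum_product)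
  ultimately have "(\<Sum>s\<in>A. \<Sum>t\<in>A. x s * x t * fourier_cos_kernel n (t - s - H))
      = real n * (\<Sum>s\<in>A. \<Sum>t\<in>A. if int n dvd (t - s - H) then x s * x t else 0)
        - (\<Sum>t\<in>A. x t)\<^sup>2 + e * (\<Sum>t\<in>A. c t * x t)\<^sup>2"
    unfolding square by (simp add: sum.distrib sum_subtractf sum_distrib_left)
  also have "(\<Sum>s\<in>A. \<Sum>t\<in>A. if int n dvd (t - s - H) then x s * x t else 0)
      = real n * (gamma_tilde n X h \<omega> + gamma_tilde n X (int n - H) \<omega>)"
    unfolding A_def x_def sum_pairs_dvd_lag[OF H] using n H by (simp add: gamma_tilde_def H_def field_simps)
  finally have "gamma_hat n X H \<omega> = gamma_tilde n X h \<omega> + gamma_tilde n X (int n - H) \<omega>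
      - (\<Sum>t\<in>A. x t)\<^sup>2 / real n ^ 2 + e * (\<Sum>t\<in>A. c t * x t)\<^sup>2 / real n ^ 2"
    using n unfolding gamma_hat_eq_kernel_sum[OF n] A_def x_def
    by (simp add: field_simps power2_eq_square)
  moreover have "cos (pi * of_int H) = cos (pi * of_int h)"
    by (cases "h \<ge> 0") (simp_all add: H_def)
  ultimately show ?thesis
    unfolding gamma_hat_abs H_def e_def A_def x_def c_def by simp
qed

lemma abs_gamma_hat_minus_tilde_le:
  assumes "\<bar>h\<bar> < int n"
  shows "\<bar>gamma_hat n X h \<omega> - gamma_tilde n X h \<omega>\<bar> \<le> \<bar>gamma_tilde n X (int n - \<bar>h\<bar>) \<omega>\<bar>
      + (\<Sum>t\<in>{1..int n}. X t \<omega>)\<^sup>2 / real n ^ 2 + (\<Sum>t\<in>{1..int n}. cos (pi * of_int t) * X t \<omega>)\<^sup>2 / real n ^ 2"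
proof -
  have nyquist: "\<bar>if b then a * q / m else 0\<bar> \<le> q / m" if "\<bar>a\<bar> \<le> 1" "0 \<le> q" "0 \<le> m" for b and a q m :: real
    using that by (simp add: abs_mult divide_right_mono mult_left_le_one_le)
  have "0 \<le> (\<Sum>t\<in>{1..int n}. X t \<omega>)\<^sup>2 / real n ^ 2" by simp
  moreover have "\<bar>if even n then cos (pi * of_int h) * (\<Sum>t\<in>{1..int n}. cos (pi * of_int t) * X t \<omega>)\<^sup>2 / real n ^ 2
      else 0\<bar> \<le> (\<Sum>t\<in>{1..int n}. cos (pi * of_int t) * X t \<omega>)\<^sup>2 / real n ^ 2"
    by (rule nyquist) simp_all
  ultimately show ?thesis
    unfolding gamma_hat_eq_circular[OF assms] by linarith
qed

section \<open>Moments of weakly stationary processes\<close>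

lemma (in prob_space) measure_abs_gt_le_integral:
  assumes "integrable M (\<lambda>x. \<bar>f x\<bar>)" and "0 < a"
  shows "measure M {x\<in>space M. \<bar>f x\<bar> > a} \<le> (\<integral>x. \<bar>f x\<bar> \<partial>M) / a"
proof -
  have "{x\<in>space M. \<bar>f x\<bar> \<ge> a} \<in> sets M"
    using borel_measurable_integrable[OF assms(1)] by measurable
  then have "measure M {x\<in>space M. \<bar>f x\<bar> > a} \<le> measure M {x\<in>space M. \<bar>f x\<bar> \<ge> a}"
    by (intro finite_measure_mono) auto
  also have "\<dots> \<le> (\<integral>x. \<bar>f x\<bar> \<partial>M) / a"
    using assms by (intro integral_Markov_inequality_measure[where A = "space M"]) auto
  finally show ?thesis .
qed

lemma abs_mult_le_mean_squares: "\<bar>a * b\<bar> \<le> (a\<^sup>2 + b\<^sup>2) / (2::real)"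
  using sum_squares_bound[of "\<bar>a\<bar>" "\<bar>b\<bar>"] by (simp add: abs_mult)

context
  fixes M :: "'a measure" and X :: "int \<Rightarrow> 'a \<Rightarrow> real"
  assumes stationary: "weakly_stationary M X"
begin

lemma stationary_prob_space: "prob_space M"
  using stationary unfolding weakly_stationary_def by blast

lemma stationary_measurable [measurable]: "X t \<in> borel_measurable M"
  using stationary unfolding weakly_stationary_def by blast

lemma stationary_integrable_square: "integrable M (\<lambda>\<omega>. (X t \<omega>)\<^sup>2)"
  using stationary unfolding weakly_stationary_def by blast

lemma stationary_integrable_mult: "integrable M (\<lambda>\<omega>. X s \<omega> * X t \<omega>)"
proof (rule Bochner_Integration.integrable_bound)
  show "integrable M (\<lambda>\<omega>. ((X s \<omega>)\<^sup>2 + (X t \<omega>)\<^sup>2) / 2)"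
    by (intro integrable_divide Bochner_Integration.integrable_add stationary_integrable_square)
  show "AE \<omega> in M. norm (X s \<omega> * X t \<omega>) \<le> norm (((X s \<omega>)\<^sup>2 + (X t \<omega>)\<^sup>2) / 2)"
  proof (intro AE_I2)
    fix \<omega>
    have "0 \<le> ((X s \<omega>)\<^sup>2 + (X t \<omega>)\<^sup>2) / 2" by simp
    then show "norm (X s \<omega> * X t \<omega>) \<le> norm (((X s \<omega>)\<^sup>2 + (X t \<omega>)\<^sup>2) / 2)"
      using abs_mult_le_mean_squares[of "X s \<omega>" "X t \<omega>"] by (simp only: real_norm_def abs_of_nonneg)
  qed
qed measurable

lemma stationary_integral_mult: "(\<integral>\<omega>. X s \<omega> * X t \<omega> \<partial>M) = autocov M X (t - s)"
proof -
  have "(\<integral>\<omega>. X s \<omega> * X (s + (t - s)) \<omega> \<partial>M) = (\<integral>\<omega>. X 0 \<omega> * X (t - s) \<omega> \<partial>M)"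
    using stationary unfolding weakly_stationary_def by blast
  then show ?thesis by (simp add: autocov_def)
qed

lemma stationary_integral_abs_mult_le: "(\<integral>\<omega>. \<bar>X s \<omega> * X t \<omega>\<bar> \<partial>M) \<le> autocov M X 0"
proof -
  have "(\<integral>\<omega>. \<bar>X s \<omega> * X t \<omega>\<bar> \<partial>M) \<le> (\<integral>\<omega>. ((X s \<omega>)\<^sup>2 + (X t \<omega>)\<^sup>2) / 2 \<partial>M)"
    by (intro integral_mono integrable_abs stationary_integrable_mult abs_mult_le_mean_squares
        integrable_divide Bochner_Integration.integrable_add stationary_integrable_square)
  also have "\<dots> = ((\<integral>\<omega>. (X s \<omega>)\<^sup>2 \<partial>M) + (\<integral>\<omega>. (X t \<omega>)\<^sup>2 \<partial>M)) / 2"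
    by (simp add: stationary_integrable_square)
  also have "\<dots> = autocov M X 0"
    using stationary_integral_mult[of s s] stationary_integral_mult[of t t] by (simp add: power2_eq_square)
  finally show ?thesis .
qed

lemma abs_autocov_le: "\<bar>autocov M X k\<bar> \<le> autocov M X 0"
  using integral_abs_bound[of M "\<lambda>\<omega>. X 0 \<omega> * X k \<omega>"] stationary_integral_abs_mult_le[of 0 k]
  by (simp add: stationary_integral_mult)

lemma
  fixes c :: "int \<Rightarrow> real"
  shows stationary_integrable_linear_square: "integrable M (\<lambda>\<omega>. (\<Sum>t\<in>A. c t * X t \<omega>)\<^sup>2)"
    and stationary_integral_linear_square:
      "(\<integral>\<omega>. (\<Sum>t\<in>A. c t * X t \<omega>)\<^sup>2 \<partial>M) = (\<Sum>s\<in>A. \<Sum>t\<in>A. c s * c t * autocov M X (t - s))"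
proof -
  have square: "(\<lambda>\<omega>. (\<Sum>t\<in>A. c t * X t \<omega>)\<^sup>2) = (\<lambda>\<omega>. \<Sum>s\<in>A. \<Sum>t\<in>A. (c s * c t) * (X s \<omega> * X t \<omega>))"
    by (simp add: power2_eq_square sum_product algebra_simps)
  show "integrable M (\<lambda>\<omega>. (\<Sum>t\<in>A. c t * X t \<omega>)\<^sup>2)"
    unfolding square by (auto intro!: integrable_sum integrable_mult_right stationary_integrable_mult)
  show "(\<integral>\<omega>. (\<Sum>t\<in>A. c t * X t \<omega>)\<^sup>2 \<partial>M) = (\<Sum>s\<in>A. \<Sum>t\<in>A. c s * c t * autocov M X (t - s))"
    unfolding square
    by (simp add: integrable_sum integrable_mult_right stationary_integrable_mult stationary_integral_mult)
qed

lemma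
  assumes "\<bar>k\<bar> \<le> int n"
  shows stationary_integrable_gamma_tilde: "integrable M (gamma_tilde n X k)"
    and stationary_integral_abs_gamma_tilde_le:
      "(\<integral>\<omega>. \<bar>gamma_tilde n X k \<omega>\<bar> \<partial>M) \<le> (real n - \<bar>k\<bar>) / real n * autocov M X 0"
proof -
  show "integrable M (gamma_tilde n X k)"
    unfolding gamma_tilde_def[abs_def] by (auto intro!: integrable_divide Bochner_Integration.integrable_sum stationary_integrable_mult)
  have "\<bar>gamma_tilde n X k \<omega>\<bar> \<le> (\<Sum>t = 1..int n - \<bar>k\<bar>. \<bar>X t \<omega> * X (t + \<bar>k\<bar>) \<omega>\<bar>) / real n" for \<omega>
  proof -
    have "\<bar>\<Sum>t = 1..int n - \<bar>k\<bar>. X t \<omega> * X (t + \<bar>k\<bar>) \<omega>\<bar> / real n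
        \<le> (\<Sum>t = 1..int n - \<bar>k\<bar>. \<bar>X t \<omega> * X (t + \<bar>k\<bar>) \<omega>\<bar>) / real n"
      by (intro divide_right_mono sum_abs) simp
    then show ?thesis by (simp add: gamma_tilde_def)
  qed
  then have "(\<integral>\<omega>. \<bar>gamma_tilde n X k \<omega>\<bar> \<partial>M)
      \<le> (\<integral>\<omega>. (\<Sum>t = 1..int n - \<bar>k\<bar>. \<bar>X t \<omega> * X (t + \<bar>k\<bar>) \<omega>\<bar>) / real n \<partial>M)"
    using \<open>integrable M (gamma_tilde n X k)\<close>
    by (intro integral_mono integrable_abs) (auto intro!: Bochner_Integration.integrable_sum integrable_abs stationary_integrable_mult)
  also have "\<dots> = (\<Sum>t = 1..int n - \<bar>k\<bar>. \<integral>\<omega>. \<bar>X t \<omega> * X (t + \<bar>k\<bar>) \<omega>\<bar> \<partial>M) / real n"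
    by (simp add: integrable_abs stationary_integrable_mult)
  also have "\<dots> \<le> (\<Sum>t = 1..int n - \<bar>k\<bar>. autocov M X 0) / real n"
    by (intro divide_right_mono sum_mono stationary_integral_abs_mult_le) simp
  also have "\<dots> = (real n - \<bar>k\<bar>) / real n * autocov M X 0"
    using assms by simp
  finally show "(\<integral>\<omega>. \<bar>gamma_tilde n X k \<omega>\<bar> \<partial>M) \<le> (real n - \<bar>k\<bar>) / real n * autocov M X 0" .
qed

context
  fixes K :: real
  assumes quadratic_form_le: "\<And>A c. finite A \<Longrightarrow> (\<And>t. t \<in> A \<Longrightarrow> \<bar>c t\<bar> \<le> 1) \<Longrightarrow>
      \<bar>\<Sum>s\<in>A. \<Sum>t\<in>A. c s * c t * autocov M X (t - s)\<bar> \<le> real (card A) * K"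
begin

lemma autocov_0_le: "autocov M X 0 \<le> K"
  using quadratic_form_le[of "{0}" "\<lambda>_. 1"] by simp

lemma stationary_integral_mean_square_le:
  assumes "n \<ge> 1" and "\<And>t. \<bar>d t\<bar> \<le> 1"
  shows "(\<integral>\<omega>. (\<Sum>t\<in>{1..int n}. d t * X t \<omega>)\<^sup>2 / real n ^ 2 \<partial>M) \<le> K / real n"
proof -
  have "(\<integral>\<omega>. (\<Sum>t\<in>{1..int n}. d t * X t \<omega>)\<^sup>2 / real n ^ 2 \<partial>M)
      = (\<Sum>s\<in>{1..int n}. \<Sum>t\<in>{1..int n}. d s * d t * autocov M X (t - s)) / real n ^ 2"
    by (simp add: stationary_integral_linear_square)
  also have "\<dots> \<le> real n * K / real n ^ 2"
    using quadratic_form_le[of "{1..int n}" d] assms(2) by (intro divide_right_mono) auto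
  also have "\<dots> = K / real n"
    using assms(1) by (simp add: power2_eq_square)
  finally show ?thesis .
qed

lemma
  assumes "\<bar>h\<bar> < int n"
  shows stationary_integrable_abs_gamma_hat_minus_tilde:
      "integrable M (\<lambda>\<omega>. \<bar>gamma_hat n X h \<omega> - gamma_tilde n X h \<omega>\<bar>)"
    and stationary_integral_abs_gamma_hat_minus_tilde_le:
      "(\<integral>\<omega>. \<bar>gamma_hat n X h \<omega> - gamma_tilde n X h \<omega>\<bar> \<partial>M) \<le> (\<bar>real_of_int h\<bar> + 2) * K / real n"
proof -
  define c where "c t = cos (pi * of_int t)" for t :: int
  define lag where "lag = gamma_tilde n X (int n - \<bar>h\<bar>)"
  define S where "S d \<omega> = (\<Sum>t\<in>{1..int n}. d t * X t \<omega>)\<^sup>2 / real n ^ 2" for d :: "int \<Rightarrow> real" and \<omega>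
  have n: "n \<ge> 1" using assms by simp
  have integrable_lag: "integrable M lag"
    unfolding lag_def using assms by (intro stationary_integrable_gamma_tilde) simp
  have integrable_S: "integrable M (S d)" for d
    unfolding S_def[abs_def] by (intro integrable_divide stationary_integrable_linear_square)
  have integral_lag: "(\<integral>\<omega>. \<bar>lag \<omega>\<bar> \<partial>M) \<le> \<bar>real_of_int h\<bar> * K / real n"
  proof -
    have "(\<integral>\<omega>. \<bar>lag \<omega>\<bar> \<partial>M) \<le> \<bar>real_of_int h\<bar> / real n * autocov M X 0"
      using stationary_integral_abs_gamma_tilde_le[of "int n - \<bar>h\<bar>" n] assms unfolding lag_def by simp
    also have "\<dots> \<le> \<bar>real_of_int h\<bar> / real n * K"
      using autocov_0_le by (intro mult_left_mono) auto
    finally show ?thesis by simp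
  qed
  have "gamma_hat n X h \<omega> - gamma_tilde n X h \<omega>
      = lag \<omega> - S (\<lambda>_. 1) \<omega> + (if even n then cos (pi * of_int h) else 0) * S c \<omega>" for \<omega>
    using gamma_hat_eq_circular[OF assms, of X \<omega>] by (simp add: lag_def S_def c_def)
  then show integrable: "integrable M (\<lambda>\<omega>. \<bar>gamma_hat n X h \<omega> - gamma_tilde n X h \<omega>\<bar>)"
    by (simp only:) (intro integrable_abs Bochner_Integration.integrable_add Bochner_Integration.integrable_diff
        integrable_mult_right integrable_lag integrable_S)
  have "(\<integral>\<omega>. \<bar>gamma_hat n X h \<omega> - gamma_tilde n X h \<omega>\<bar> \<partial>M)
      \<le> (\<integral>\<omega>. \<bar>lag \<omega>\<bar> + S (\<lambda>_. 1) \<omega> + S c \<omega> \<partial>M)"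
    using abs_gamma_hat_minus_tilde_le[OF assms]
    by (intro integral_mono integrable Bochner_Integration.integrable_add integrable_abs integrable_lag integrable_S)
      (simp add: lag_def S_def c_def)
  also have "\<dots> = (\<integral>\<omega>. \<bar>lag \<omega>\<bar> \<partial>M) + (\<integral>\<omega>. S (\<lambda>_. 1) \<omega> \<partial>M) + (\<integral>\<omega>. S c \<omega> \<partial>M)"
    by (simp add: integrable_abs integrable_lag integrable_S)
  also have "\<dots> \<le> \<bar>real_of_int h\<bar> * K / real n + K / real n + K / real n"
    unfolding S_def by (intro add_mono integral_lag stationary_integral_mean_square_le n) (simp_all add: c_def)
  also have "\<dots> = (\<bar>real_of_int h\<bar> + 2) * K / real n"
    by (simp add: add_divide_distrib algebra_simps)
  finally show "(\<integral>\<omega>. \<bar>gamma_hat n X h \<omega> - gamma_tilde n X h \<omega>\<bar> \<partial>M) \<le> (\<bar>real_of_int h\<bar> + 2) * K / real n" .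
qed

end

end

section \<open>Processes with spectral density f_delta\<close>

lemma f_delta_abs_quadratic_form_le:
  fixes M :: "'a measure" and X :: "int \<Rightarrow> 'a \<Rightarrow> real" and gU c :: "int \<Rightarrow> real"
  assumes lam: "0 < lam" "lam < pi" and \<delta>: "0 < \<delta>" "\<delta> < 1"
    and U: "spectral_density gU fU" "(\<lambda>k. \<bar>gU k\<bar>) summable_on UNIV"
    and X: "weakly_stationary M X" "spectral_density (autocov M X) (f_delta fU lam \<delta>)"
    and A: "finite A" "\<And>t. t \<in> A \<Longrightarrow> \<bar>c t\<bar> \<le> 1"
  shows "\<bar>\<Sum>s\<in>A. \<Sum>t\<in>A. c s * c t * autocov M X (t - s)\<bar>
           \<le> real (card A) * ((\<Sum>\<^sub>\<infinity>k. \<bar>gU k\<bar>) / (\<delta> * sin lam)\<^sup>2)"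
proof -
  have "0 \<le> 1 - \<delta>" "1 - \<delta> < 1" using \<delta> by auto
  from abs_quadratic_form_ar2_le[OF lam this abs_autocov_le[OF X(1)]
      spectral_density_f_delta_recurrence[OF U(1) X(2) \<delta>] U(2) A]
  show ?thesis by simp
qed

lemma f_delta_measure_deviation_le:
  fixes M :: "'a measure" and X :: "int \<Rightarrow> 'a \<Rightarrow> real" and gU :: "int \<Rightarrow> real"
  assumes lam: "0 < lam" "lam < pi" and \<delta>: "0 < \<delta>" "\<delta> < 1"
    and U: "spectral_density gU fU" "(\<lambda>k. \<bar>gU k\<bar>) summable_on UNIV"
    and X: "weakly_stationary M X" "spectral_density (autocov M X) (f_delta fU lam \<delta>)"
    and hn: "\<bar>h\<bar> < int n" and "0 < C"
  shows "measure M {\<omega>\<in>space M. \<bar>gamma_hat n X h \<omega> - gamma_tilde n X h \<omega>\<bar> > C / (real n * \<delta>^2)}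
           \<le> (\<bar>real_of_int h\<bar> + 2) * (\<Sum>\<^sub>\<infinity>k. \<bar>gU k\<bar>) / (sin lam)\<^sup>2 / C"
proof -
  interpret prob_space M by (rule stationary_prob_space[OF X(1)])
  define K where "K = (\<Sum>\<^sub>\<infinity>k. \<bar>gU k\<bar>) / (\<delta> * sin lam)\<^sup>2"
  have quadratic_form_le: "\<bar>\<Sum>s\<in>A. \<Sum>t\<in>A. c s * c t * autocov M X (t - s)\<bar> \<le> real (card A) * K"
    if "finite A" "\<And>t. t \<in> A \<Longrightarrow> \<bar>c t\<bar> \<le> 1" for A c
    unfolding K_def by (rule f_delta_abs_quadratic_form_le[OF lam \<delta> U X that])
  have "measure M {\<omega>\<in>space M. \<bar>gamma_hat n X h \<omega> - gamma_tilde n X h \<omega>\<bar> > C / (real n * \<delta>^2)}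
      \<le> (\<integral>\<omega>. \<bar>gamma_hat n X h \<omega> - gamma_tilde n X h \<omega>\<bar> \<partial>M) / (C / (real n * \<delta>^2))"
    using \<open>0 < C\<close> \<delta> hn
    by (intro measure_abs_gt_le_integral stationary_integrable_abs_gamma_hat_minus_tilde[OF X(1) quadratic_form_le]) auto
  also have "\<dots> \<le> ((\<bar>real_of_int h\<bar> + 2) * K / real n) / (C / (real n * \<delta>^2))"
    using \<open>0 < C\<close> \<delta> stationary_integral_abs_gamma_hat_minus_tilde_le[OF X(1) quadratic_form_le hn]
    by (intro divide_right_mono) auto
  also have "\<dots> = (\<bar>real_of_int h\<bar> + 2) * (\<Sum>\<^sub>\<infinity>k. \<bar>gU k\<bar>) / (sin lam)\<^sup>2 / C"
    using \<delta> hn \<open>0 < C\<close> sin_gt_zero[OF lam] by (simp add: K_def field_simps)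
  finally show ?thesis .
qed

theorem proposition1:
  fixes lam0 :: real and fU :: "real \<Rightarrow> real"
    and MU :: "'b measure" and U :: "int \<Rightarrow> 'b \<Rightarrow> real"
    and M :: "real \<Rightarrow> 'a measure" and X :: "real \<Rightarrow> int \<Rightarrow> 'a \<Rightarrow> real"
    and h :: int
  assumes "0 < lam0" and "lam0 < pi"
    and "weakly_stationary MU U"
    and "(\<lambda>k. \<bar>autocov MU U k\<bar>) summable_on UNIV"
    and "spectral_density (autocov MU U) fU"
    and "continuous_on {0..pi} fU"
    and "(INF l\<in>{0..pi}. fU l) > 0"
    and "\<forall>\<delta>\<in>{0<..<1}. weakly_stationary (M \<delta>) (X \<delta>) \<and>
           spectral_density (autocov (M \<delta>) (X \<delta>)) (f_delta fU lam0 \<delta>)"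
  shows "\<forall>e>0. \<exists>C n0. \<forall>n\<ge>n0. \<forall>\<delta>\<in>{0<..<1}.
           measure (M \<delta>) {\<omega>\<in>space (M \<delta>).
              \<bar>gamma_hat n (X \<delta>) h \<omega> - gamma_tilde n (X \<delta>) h \<omega>\<bar> > C / (real n * \<delta>^2)} < e"
proof (intro allI impI)
  fix e :: real assume "e > 0"
  define B where "B = (\<bar>real_of_int h\<bar> + 2) * (\<Sum>\<^sub>\<infinity>k. \<bar>autocov MU U k\<bar>) / (sin lam0)\<^sup>2"
  have "B \<ge> 0" unfolding B_def by (intro divide_nonneg_nonneg mult_nonneg_nonneg infsum_nonneg) auto
  define C where "C = (B + 1) / e"
  have "C > 0" "B / C < e"
    using \<open>e > 0\<close> \<open>B \<ge> 0\<close> by (simp_all add: C_def field_simps)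
  have "measure (M \<delta>) {\<omega>\<in>space (M \<delta>).
      \<bar>gamma_hat n (X \<delta>) h \<omega> - gamma_tilde n (X \<delta>) h \<omega>\<bar> > C / (real n * \<delta>^2)} < e"
    if "n \<ge> nat \<bar>h\<bar> + 1" and "\<delta> \<in> {0<..<1}" for n \<delta>
  proof -
    have "\<bar>h\<bar> < int n" using that(1) by linarith
    with that(2) assms(8) have "measure (M \<delta>) {\<omega>\<in>space (M \<delta>).
        \<bar>gamma_hat n (X \<delta>) h \<omega> - gamma_tilde n (X \<delta>) h \<omega>\<bar> > C / (real n * \<delta>^2)} \<le> B / C"
      unfolding B_def by (intro f_delta_measure_deviation_le[OF assms(1,2) _ _ assms(5,4) _ _ _ \<open>C > 0\<close>]) auto
    with \<open>B / C < e\<close> show ?thesis by linarith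
  qed
  then show "\<exists>C n0. \<forall>n\<ge>n0. \<forall>\<delta>\<in>{0<..<1}. measure (M \<delta>) {\<omega>\<in>space (M \<delta>).
      \<bar>gamma_hat n (X \<delta>) h \<omega> - gamma_tilde n (X \<delta>) h \<omega>\<bar> > C / (real n * \<delta>^2)} < e"
    by blast
qed

end
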